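(* Let $R$ be a local ring with stable regular maximal ideal $M$, let $R_1=E(M)$, and suppose $R\subseteq R_1$ is a quadratic extension and $R_1$ is a local ring with maximal ideal $M_1$. Let $R_2=E(M_1)$. (1) If $R_1\neq R_2$, then $M_1=MR_2$, $M_1$ is a stable ideal of $R_1$, and $R_1=R+M_1$. (2) If $R_1=R_2$, then $M_1$ is a principal ideal of $R_1$ and $R_1=R+xR$ for every $x\in R_1\setminus R$.
   Context: All rings are commutative with identity; a local ring is a ring with a unique maximal ideal (not necessarily Noetherian). $Q(R)$ is the total ring of quotients. An ideal is regular if it contains a nonzerodivisor. For a regular fractional ideal $I$ of a ring $A$ (an $A$-submodule of $Q(A)$ containing a nonzerodivisor with $bI\subseteq A$ for some nonzerodivisor $b$), $E(I)=\{q\in Q(A):qI\subseteq I\}$, and $I$ is stable if it is projective as an $E(I)$-module. An extension $R\subseteq S$ is quadratic if $xy\in xR+yR+R$ for all $x,y\in S$. *)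

theory Defs
  imports Main
begin

text \<open>Convention: all rings live inside an ambient commutative ring of type 'a.  The ambient
  type plays the role of the total ring of quotients Q(R) of the base ring R
  (assumption total_quotient_ring below).\<close>

definition subring :: "'a::comm_ring_1 set \<Rightarrow> bool" where
  "subring A \<longleftrightarrow> 0 \<in> A \<and> 1 \<in> A \<and> (\<forall>x\<in>A. \<forall>y\<in>A. x + y \<in> A \<and> x * y \<in> A \<and> - x \<in> A)"

definition nzd :: "'a::comm_ring_1 set \<Rightarrow> 'a \<Rightarrow> bool" where
  "nzd A b \<longleftrightarrow> b \<in> A \<and> (\<forall>c\<in>A. b * c = 0 \<longrightarrow> c = 0)"

definition total_quotient_ring :: "'a::comm_ring_1 set \<Rightarrow> bool" where
  "total_quotient_ring R \<longleftrightarrow> subring R \<and>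
     (\<forall>b. nzd R b \<longrightarrow> (\<exists>c. b * c = 1)) \<and>
     (\<forall>q. \<exists>a\<in>R. \<exists>b. nzd R b \<and> q * b = a)"

definition ideal :: "'a::comm_ring_1 set \<Rightarrow> 'a set \<Rightarrow> bool" where
  "ideal A I \<longleftrightarrow> I \<subseteq> A \<and> 0 \<in> I \<and> (\<forall>x\<in>I. \<forall>y\<in>I. x + y \<in> I) \<and>
     (\<forall>r\<in>A. \<forall>x\<in>I. r * x \<in> I)"

definition maximal_ideal :: "'a::comm_ring_1 set \<Rightarrow> 'a set \<Rightarrow> bool" where
  "maximal_ideal A M \<longleftrightarrow> ideal A M \<and> M \<noteq> A \<and>
     (\<forall>J. ideal A J \<longrightarrow> M \<subseteq> J \<longrightarrow> J = M \<or> J = A)"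

definition local_ring :: "'a::comm_ring_1 set \<Rightarrow> 'a set \<Rightarrow> bool" where
  "local_ring A M \<longleftrightarrow> subring A \<and> maximal_ideal A M \<and>
     (\<forall>N. maximal_ideal A N \<longrightarrow> N = M)"

definition regular_ideal :: "'a::comm_ring_1 set \<Rightarrow> 'a set \<Rightarrow> bool" where
  "regular_ideal A I \<longleftrightarrow> ideal A I \<and> (\<exists>b\<in>I. nzd A b)"

definition regular_fractional_ideal :: "'a::comm_ring_1 set \<Rightarrow> 'a set \<Rightarrow> bool" where
  "regular_fractional_ideal A I \<longleftrightarrow>
     0 \<in> I \<and> (\<forall>x\<in>I. \<forall>y\<in>I. x + y \<in> I) \<and> (\<forall>r\<in>A. \<forall>x\<in>I. r * x \<in> I) \<and>
     (\<exists>u\<in>I. \<forall>c. u * c = 0 \<longrightarrow> c = 0) \<and>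
     (\<exists>b. nzd A b \<and> (\<forall>x\<in>I. b * x \<in> A))"

definition E :: "'a::comm_ring_1 set \<Rightarrow> 'a set" where
  "E I = {q. \<forall>x\<in>I. q * x \<in> I}"

text \<open>Defined as: the canonical free presentation (free B-module on the set P)
  mapping onto P splits B-linearly, i.e. there is a B-linear map
  x \<mapsto> (coefficients f p x)_{p \<in> P} into the finitely supported
  functions P \<rightarrow> B with x = \<Sum> f p x * p (P is a direct summand of a free module).\<close>
definition projective_module :: "'a::comm_ring_1 set \<Rightarrow> 'a set \<Rightarrow> bool" where
  "projective_module B P \<longleftrightarrow>
     (\<exists>f :: 'a \<Rightarrow> 'a \<Rightarrow> 'a.
        (\<forall>p\<in>P. \<forall>x\<in>P. f p x \<in> B) \<and>
        (\<forall>p\<in>P. \<forall>x\<in>P. \<forall>y\<in>P. f p (x + y) = f p x + f p y) \<and>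
        (\<forall>p\<in>P. \<forall>r\<in>B. \<forall>x\<in>P. f p (r * x) = r * f p x) \<and>
        (\<forall>x\<in>P. finite {p\<in>P. f p x \<noteq> 0} \<and> x = (\<Sum>p\<in>{p\<in>P. f p x \<noteq> 0}. f p x * p)))"

definition stable :: "'a::comm_ring_1 set \<Rightarrow> 'a set \<Rightarrow> bool" where
  "stable A I \<longleftrightarrow> regular_fractional_ideal A I \<and> projective_module (E I) I"

definition quadratic_ext :: "'a::comm_ring_1 set \<Rightarrow> 'a set \<Rightarrow> bool" where
  "quadratic_ext R S \<longleftrightarrow> R \<subseteq> S \<and>
     (\<forall>x\<in>S. \<forall>y\<in>S. \<exists>a\<in>R. \<exists>b\<in>R. \<exists>c\<in>R. x * y = x * a + y * b + c)"

definition principal_ideal :: "'a::comm_ring_1 set \<Rightarrow> 'a set \<Rightarrow> bool" where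
  "principal_ideal A I \<longleftrightarrow> ideal A I \<and> (\<exists>x\<in>A. I = {r * x |r. r \<in> A})"

definition ideal_times :: "'a::comm_ring_1 set \<Rightarrow> 'a set \<Rightarrow> 'a set" where
  "ideal_times I J = {s. \<exists>(n::nat) f g. (\<forall>i<n. f i \<in> I \<and> g i \<in> J) \<and> s = (\<Sum>i<n. f i * g i)}"

definition ideal_sum :: "'a::comm_ring_1 set \<Rightarrow> 'a set \<Rightarrow> 'a set" where
  "ideal_sum I J = {a + b |a b. a \<in> I \<and> b \<in> J}"

end

theory Submission imports Defs begin

text \<open>Write \<open>R1 = E(M)\<close>. Since \<open>M\<close> is stable and \<open>R1\<close> is local, a trace argument on a
  projective basis shows \<open>M = m R1\<close> for some \<open>m\<close> invertible in \<open>Q(R)\<close>. Quadraticity of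
  \<open>R \<subseteq> R1\<close> gives \<open>M1 M1 \<subseteq> M\<close>, hence \<open>m\<^sup>-\<^sup>1 M1 M1 \<subseteq> R1\<close>. Either \<open>m\<^sup>-\<^sup>1 M1 \<subseteq> E(M1)\<close>, so that
  \<open>M1 = m E(M1)\<close> is invertible (hence stable), or some element of \<open>m\<^sup>-\<^sup>1 M1 M1\<close> is a unit of
  \<open>R1\<close>, which makes \<open>M1\<close> principal with \<open>E(M1) = R1\<close>. In the first case \<open>M1 \<noteq> M\<close>, and
  quadraticity once more yields \<open>R1 = R + M1\<close>. For \<open>R1 = R + xR\<close> one uses the quadratic
  relation of \<open>x\<close> when \<open>M1 = M\<close>, and \<open>M1 = gR + M\<close> for a generator \<open>g\<close> of \<open>M1\<close> otherwise.\<close>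

section \<open>Ideals and local rings\<close>

lemma subring_add: "subring A \<Longrightarrow> x \<in> A \<Longrightarrow> y \<in> A \<Longrightarrow> x + y \<in> A"
  and subring_mult: "subring A \<Longrightarrow> x \<in> A \<Longrightarrow> y \<in> A \<Longrightarrow> x * y \<in> A"
  and subring_uminus: "subring A \<Longrightarrow> x \<in> A \<Longrightarrow> - x \<in> A"
  by (simp_all add: subring_def)

lemma subring_diff: "subring A \<Longrightarrow> x \<in> A \<Longrightarrow> y \<in> A \<Longrightarrow> x - y \<in> A"
  using subring_add subring_uminus by (metis diff_conv_add_uminus)

lemma ideal_add: "ideal A I \<Longrightarrow> x \<in> I \<Longrightarrow> y \<in> I \<Longrightarrow> x + y \<in> I"
  by (simp add: ideal_def)

lemma ideal_subset: "ideal A I \<Longrightarrow> x \<in> I \<Longrightarrow> x \<in> A"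
  by (auto simp: ideal_def)

lemma ideal_zero: "ideal A I \<Longrightarrow> 0 \<in> I"
  by (simp add: ideal_def)

lemma ideal_mult: "ideal A I \<Longrightarrow> r \<in> A \<Longrightarrow> x \<in> I \<Longrightarrow> r * x \<in> I"
  by (simp add: ideal_def)

lemma ideal_diff:
  assumes "subring A" "ideal A I" "x \<in> I" "y \<in> I"
  shows "x - y \<in> I"
proof -
  have "- 1 \<in> A" using assms(1) by (auto simp: subring_def)
  then have "- y \<in> I" using ideal_mult[OF assms(2) _ assms(4)] by fastforce
  then show ?thesis using ideal_add[OF assms(2,3)] by (metis diff_conv_add_uminus)
qed

lemma ideal_sum_mem:
  assumes "ideal A I" "finite S" "\<And>p. p \<in> S \<Longrightarrow> g p \<in> I"
  shows "sum g S \<in> I"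
  using assms(2,3) by (induction S rule: finite_induct) (auto intro: ideal_add[OF assms(1)] ideal_zero[OF assms(1)])

lemma ideal_one_eq: "ideal A I \<Longrightarrow> 1 \<in> I \<Longrightarrow> I = A"
  unfolding ideal_def by (metis mult.right_neutral subsetI subset_antisym)

lemma ideal_principal: "subring A \<Longrightarrow> x \<in> A \<Longrightarrow> ideal A {x * r |r. r \<in> A}"
  unfolding ideal_def subring_def
  by (auto simp: mult.left_commute) (metis mult_zero_right, metis distrib_left, metis mult.left_commute)

lemma ideal_Union_chain:
  assumes "C \<noteq> {}" "\<And>X. X \<in> C \<Longrightarrow> ideal A X"
    and chain: "\<And>X Y. X \<in> C \<Longrightarrow> Y \<in> C \<Longrightarrow> X \<subseteq> Y \<or> Y \<subseteq> X"
  shows "ideal A (\<Union>C)"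
  unfolding ideal_def
proof (intro conjI ballI)
  show "\<Union>C \<subseteq> A" using assms(2) by (fastforce simp: ideal_def)
  show "0 \<in> \<Union>C" using assms(1,2) by (auto simp: ideal_def)
  fix x y assume "x \<in> \<Union>C" "y \<in> \<Union>C"
  then obtain X Y where "X \<in> C" "Y \<in> C" "x \<in> X" "y \<in> Y" by blast
  with chain[of X Y] show "x + y \<in> \<Union>C" using assms(2) by (meson UnionI ideal_add subsetD)
next
  fix r x assume "r \<in> A" "x \<in> \<Union>C"
  then show "r * x \<in> \<Union>C" using assms(2) ideal_mult by blast
qed

lemma proper_ideal_in_maximal:
  assumes "subring A" "ideal A I" "1 \<notin> I"
  shows "\<exists>N. maximal_ideal A N \<and> I \<subseteq> N"
proof -
  define S where "S = {J. ideal A J \<and> I \<subseteq> J \<and> 1 \<notin> J}"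
  have "\<exists>N\<in>S. \<forall>J\<in>S. N \<subseteq> J \<longrightarrow> J = N"
  proof (rule subset_Zorn_nonempty)
    show "S \<noteq> {}" using assms by (auto simp: S_def)
    fix C assume "C \<noteq> {}" "subset.chain S C"
    then show "\<Union>C \<in> S"
      using ideal_Union_chain[of C A] by (auto simp: S_def subset.chain_def)
  qed
  then obtain N where N: "N \<in> S" and max: "\<And>J. J \<in> S \<Longrightarrow> N \<subseteq> J \<Longrightarrow> J = N" by blast
  have "maximal_ideal A N"
    unfolding maximal_ideal_def
  proof (intro conjI allI impI)
    show "ideal A N" "N \<noteq> A" using N assms(1) by (auto simp: S_def subring_def)
    fix J assume "ideal A J" "N \<subseteq> J"
    then show "J = N \<or> J = A" using N max[of J] by (cases "1 \<in> J") (auto simp: S_def ideal_one_eq)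
  qed
  then show ?thesis using N by (auto simp: S_def)
qed

lemma local_ring_subring: "local_ring A N \<Longrightarrow> subring A"
  and local_ring_ideal: "local_ring A N \<Longrightarrow> ideal A N"
  by (simp_all add: local_ring_def maximal_ideal_def)

lemma local_ring_one_notin: "local_ring A N \<Longrightarrow> 1 \<notin> N"
  using ideal_one_eq by (fastforce simp: local_ring_def maximal_ideal_def)

lemma local_ring_unit:
  assumes loc: "local_ring A N" and "x \<in> A" "x \<notin> N"
  shows "\<exists>y\<in>A. x * y = 1"
proof (rule ccontr)
  assume "\<not> ?thesis"
  then have "1 \<notin> {x * r |r. r \<in> A}" by auto
  with ideal_principal[OF local_ring_subring[OF loc] \<open>x \<in> A\<close>]
  obtain N' where "maximal_ideal A N'" "{x * r |r. r \<in> A} \<subseteq> N'"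
    using proper_ideal_in_maximal local_ring_subring[OF loc] by blast
  moreover have "1 \<in> A" using local_ring_subring[OF loc] by (simp add: subring_def)
  ultimately show False using loc \<open>x \<notin> N\<close> by (force simp: local_ring_def)
qed

section \<open>Stable ideals over a local ring\<close>

text \<open>As \<open>b\<close> is invertible in the ambient ring, each coordinate \<open>f p\<close> is multiplication
  by the fraction \<open>f p b / b\<close>.\<close>
lemma projective_coordinate_swap:
  assumes lin: "\<forall>p\<in>I. \<forall>r\<in>E I. \<forall>x\<in>I. f p (r * x) = r * f p x"
    and IE: "I \<subseteq> E I" and b: "b \<in> I" "b * c = 1" and I: "p \<in> I" "x \<in> I" "y \<in> I"
  shows "f p x * y = x * f p y"
proof -
  have swap_b: "b * f p z = z * f p b" if "z \<in> I" for z
    using lin I(1) b(1) that IE by (metis subsetD mult.commute)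
  have "f p x * y = (b * c) * (f p x * y)" using b(2) by simp
  also have "\<dots> = c * (b * f p x) * y" by (simp add: ac_simps)
  also have "\<dots> = x * (c * (y * f p b))" using swap_b[OF I(2)] by (simp add: ac_simps)
  also have "\<dots> = x * (c * (b * f p y))" using swap_b[OF I(3)] by simp
  also have "\<dots> = x * ((b * c) * f p y)" by (simp add: ac_simps)
  also have "\<dots> = x * f p y" using b(2) by simp
  finally show ?thesis .
qed

text \<open>Trace argument: the coordinates of a projective basis satisfy
  \<open>1 = \<Sum>p f p p\<close>, so one diagonal coordinate \<open>f m m\<close> is a unit of the local ring
  \<open>E I\<close>, and then \<open>m\<close> generates \<open>I\<close>.\<close>
lemma projective_local_invertible_generator:
  assumes proj: "projective_module (E I) I" and IE: "I \<subseteq> E I"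
    and b: "b \<in> I" "b * c = 1" and loc: "local_ring (E I) N"
  shows "\<exists>m\<in>I. \<exists>m'. m * m' = 1 \<and> (\<forall>x\<in>I. m' * x \<in> E I)"
proof -
  obtain f where f_E: "\<forall>p\<in>I. \<forall>x\<in>I. f p x \<in> E I"
    and f_lin: "\<forall>p\<in>I. \<forall>r\<in>E I. \<forall>x\<in>I. f p (r * x) = r * f p x"
    and f_sum: "\<forall>x\<in>I. finite {p\<in>I. f p x \<noteq> 0} \<and> x = (\<Sum>p\<in>{p\<in>I. f p x \<noteq> 0}. f p x * p)"
    using proj unfolding projective_module_def by blast
  note swap = projective_coordinate_swap[OF f_lin IE b]
  define S where "S = {p\<in>I. f p b \<noteq> 0}"
  have "1 = c * (\<Sum>p\<in>S. f p b * p)" using f_sum b by (simp add: S_def mult.commute)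
  also have "\<dots> = (\<Sum>p\<in>S. c * (b * f p p))" using swap b(1) by (simp add: S_def sum_distrib_left)
  also have "\<dots> = (\<Sum>p\<in>S. f p p)" using b(2) by (simp add: mult.assoc[symmetric] mult.commute[of c])
  finally have "(\<Sum>p\<in>S. f p p) \<notin> N" using local_ring_one_notin[OF loc] by simp
  moreover have "finite S" using f_sum b(1) by (simp add: S_def)
  ultimately obtain m where m: "m \<in> I" "f m m \<notin> N"
    using ideal_sum_mem[OF local_ring_ideal[OF loc], of S "\<lambda>p. f p p"] by (auto simp: S_def)
  then obtain v where v: "v \<in> E I" "f m m * v = 1" using local_ring_unit[OF loc] f_E by blast
  have gen: "x = (v * f m x) * m" if "x \<in> I" for x
    using swap[OF m(1) that m(1)] v(2) by (metis mult.assoc mult.commute mult_1_right)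
  define m' where "m' = v * f m b * c"
  have mm': "m * m' = 1" using gen[OF b(1)] b(2) by (simp add: m'_def ac_simps)
  have "m' * x \<in> E I" if "x \<in> I" for x
  proof -
    have "m' * x = v * f m x" using gen[OF that] mm' by (metis mult.commute mult.left_commute mult_1_right)
    then show ?thesis using v(1) f_E m(1) that local_ring_subring[OF loc] by (simp add: subring_mult)
  qed
  then show ?thesis using m(1) mm' by blast
qed

lemma projective_if_invertible_generator:
  assumes "0 \<in> I" "m \<in> I" "m * m' = 1" "\<forall>x\<in>I. m' * x \<in> E I"
  shows "projective_module (E I) I"
  unfolding projective_module_def
proof (rule exI[of _ "\<lambda>p x. if p = m then m' * x else 0"], intro conjI ballI)
  fix x assume x: "x \<in> I"
  show "finite {p \<in> I. (if p = m then m' * x else 0) \<noteq> 0}"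
    by (rule finite_subset[of _ "{m}"]) auto
  have "x = m * (m' * x)" using assms(3) by (simp add: mult.assoc[symmetric])
  then show "x = (\<Sum>p\<in>{p \<in> I. (if p = m then m' * x else 0) \<noteq> 0}. (if p = m then m' * x else 0) * p)"
    using assms(2) by (cases "m' * x = 0") (auto simp: mult.commute)
qed (use assms in \<open>auto simp: E_def distrib_left mult.left_commute\<close>)

lemma stable_if_invertible_generator:
  assumes "subring A" "ideal A I" "m \<in> I" "m * m' = 1" "\<forall>x\<in>I. m' * x \<in> E I"
  shows "stable A I"
proof -
  have "\<forall>c. m * c = 0 \<longrightarrow> c = 0" using assms(4) by (metis mult.left_commute mult_1_right mult_zero_right)
  moreover have "nzd A 1 \<and> (\<forall>x\<in>I. 1 * x \<in> A)"
    using assms(1) ideal_subset[OF assms(2)] by (simp add: nzd_def subring_def)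
  ultimately have "regular_fractional_ideal A I"
    using assms(2,3) unfolding regular_fractional_ideal_def ideal_def by blast
  then show ?thesis
    using projective_if_invertible_generator[OF ideal_zero[OF assms(2)] assms(3-5)]
    by (simp add: stable_def)
qed

lemma ideal_times_mem: "x \<in> I \<Longrightarrow> y \<in> J \<Longrightarrow> x * y \<in> ideal_times I J"
  unfolding ideal_times_def by (intro CollectI exI[of _ "1::nat"] exI[of _ "\<lambda>_. x"] exI[of _ "\<lambda>_. y"]) simp

lemma ideal_times_E_subset:
  assumes "ideal A J" "I \<subseteq> J"
  shows "ideal_times I (E J) \<subseteq> J"
proof
  fix s assume "s \<in> ideal_times I (E J)"
  then obtain n :: nat and f g where fg: "\<forall>i<n. f i \<in> I \<and> g i \<in> E J" and s: "s = (\<Sum>i<n. f i * g i)"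
    unfolding ideal_times_def by blast
  have "f i * g i \<in> J" if "i < n" for i
  proof -
    have "f i \<in> J" "g i \<in> E J" using fg that assms(2) by auto
    then have "g i * f i \<in> J" by (simp add: E_def)
    then show ?thesis by (simp add: mult.commute)
  qed
  then show "s \<in> J" unfolding s by (intro ideal_sum_mem[OF assms(1)]) auto
qed

section \<open>Quadratic extensions of local rings\<close>

locale quadratic_local_extension =
  fixes R M R1 M1 :: "'a::comm_ring_1 set"
  assumes local_R: "local_ring R M" and local_R1: "local_ring R1 M1"
    and quadratic: "quadratic_ext R R1" and R1_sub_E: "R1 \<subseteq> E M"
begin

lemma subring_R: "subring R" and subring_R1: "subring R1"
  and ideal_M: "ideal R M" and ideal_M1: "ideal R1 M1"
  using local_R local_R1 by (simp_all add: local_ring_subring local_ring_ideal)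

lemmas R_add = subring_add[OF subring_R] and R_mult = subring_mult[OF subring_R]
  and R_diff = subring_diff[OF subring_R]
  and R1_add = subring_add[OF subring_R1] and R1_mult = subring_mult[OF subring_R1]
  and R1_diff = subring_diff[OF subring_R1]
  and M_add = ideal_add[OF ideal_M] and M_diff = ideal_diff[OF subring_R ideal_M]
  and M1_mult = ideal_mult[OF ideal_M1] and M1_diff = ideal_diff[OF subring_R1 ideal_M1]

lemma R_sub_R1: "R \<subseteq> R1"
  using quadratic by (simp add: quadratic_ext_def)

lemma quadratic_relation: "x \<in> R1 \<Longrightarrow> y \<in> R1 \<Longrightarrow> \<exists>a\<in>R. \<exists>b\<in>R. \<exists>c\<in>R. x * y = x * a + y * b + c"
  using quadratic by (simp add: quadratic_ext_def)

lemma M_sub_R: "M \<subseteq> R" and M1_sub_R1: "M1 \<subseteq> R1"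
  using ideal_subset[OF ideal_M] ideal_subset[OF ideal_M1] by blast+

lemma mult_M: "r \<in> R1 \<Longrightarrow> x \<in> M \<Longrightarrow> r * x \<in> M"
  using R1_sub_E by (auto simp: E_def)

lemma M1_inter_R:
  assumes "r \<in> R" "r \<in> M1"
  shows "r \<in> M"
proof (rule ccontr)
  assume "r \<notin> M"
  then obtain z where "z \<in> R" "r * z = 1" using local_ring_unit[OF local_R] assms(1) by blast
  then have "1 \<in> M1" using M1_mult[of z r] R_sub_R1 assms(2) by (auto simp: mult.commute)
  then show False using local_ring_one_notin[OF local_R1] by simp
qed

lemma M_cancel_unit_R1:
  assumes "u \<in> R1" "u \<notin> M1" "u * v \<in> M"
  shows "v \<in> M"
proof -
  obtain w where "w \<in> R1" "u * w = 1" using local_ring_unit[OF local_R1] assms(1,2) by blast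
  then have "v = w * (u * v)" by (metis mult.left_commute mult_1_right)
  then show ?thesis using mult_M[OF \<open>w \<in> R1\<close> assms(3)] by simp
qed

lemma M_cancel_unit_R: "u \<in> R \<Longrightarrow> u \<notin> M \<Longrightarrow> u * v \<in> M \<Longrightarrow> v \<in> M"
  using M_cancel_unit_R1 M1_inter_R R_sub_R1 by blast

lemma M_sub_M1: "M \<subseteq> M1"
  using M_cancel_unit_R1[of _ 1] M_sub_R R_sub_R1 local_ring_one_notin[OF local_R] by auto

lemma square_in_M:
  assumes x: "x \<in> M1"
  shows "x * x \<in> M"
proof -
  have xR1: "x \<in> R1" using x M1_sub_R1 by auto
  obtain a b c where abc: "a \<in> R" "b \<in> R" "c \<in> R" and xx: "x * x = x * a + x * b + c"
    using quadratic_relation[OF xR1 xR1] by blast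
  define s where "s = a + b"
  have sR: "s \<in> R" using R_add abc by (simp add: s_def)
  have xs: "(x - s) * x = c" using xx by (simp add: s_def algebra_simps)
  have "x - s \<in> R1" using R1_diff xR1 sR R_sub_R1 by blast
  then have "c \<in> M" using M1_inter_R[OF abc(3)] M1_mult[OF _ x] xs by metis
  show ?thesis
  proof (cases "s \<in> M")
    case True
    then have "x * s + c \<in> M" using M_add[OF mult_M[OF xR1] \<open>c \<in> M\<close>] by blast
    then show ?thesis using xs by (simp add: algebra_simps)
  next
    case False
    have "x - s \<notin> M1"
    proof
      assume "x - s \<in> M1"
      then have "s \<in> M1" using M1_diff[OF x] by fastforce
      then show False using M1_inter_R sR False by blast
    qed
    then have "x \<in> M" using M_cancel_unit_R1 \<open>x - s \<in> R1\<close> xs \<open>c \<in> M\<close> by blast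
    then show ?thesis using mult_M xR1 by blast
  qed
qed

lemma product_in_M:
  assumes x: "x \<in> M1" and y: "y \<in> M1"
  shows "x * y \<in> M"
proof -
  have xR1: "x \<in> R1" and yR1: "y \<in> R1" using x y M1_sub_R1 by auto
  obtain a b c where abc: "a \<in> R" "b \<in> R" "c \<in> R" and xy: "x * y = x * a + y * b + c"
    using quadratic_relation[OF xR1 yR1] by blast
  have aR1: "a \<in> R1" and bR1: "b \<in> R1" using abc R_sub_R1 by auto
  have "c = x * y - a * x - b * y" using xy by (simp add: algebra_simps)
  also have "\<dots> \<in> M1" using M1_diff[OF M1_diff[OF M1_mult[OF xR1 y] M1_mult[OF aR1 x]] M1_mult[OF bR1 y]] .
  finally have cM: "c \<in> M" using M1_inter_R abc(3) by blast
  have "b * (x * y) = y * (x * x) - a * (x * x) - x * c"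
    using arg_cong[OF xy, of "(*) x"] by (simp add: algebra_simps)
  also have "\<dots> \<in> M"
    using M_diff[OF M_diff[OF mult_M[OF yR1 square_in_M[OF x]] mult_M[OF aR1 square_in_M[OF x]]] mult_M[OF xR1 cM]] .
  finally have bxy: "b * (x * y) \<in> M" .
  have "a * (x * y) = x * (y * y) - b * (y * y) - y * c"
    using arg_cong[OF xy, of "(*) y"] by (simp add: algebra_simps)
  also have "\<dots> \<in> M"
    using M_diff[OF M_diff[OF mult_M[OF xR1 square_in_M[OF y]] mult_M[OF bR1 square_in_M[OF y]]] mult_M[OF yR1 cM]] .
  finally have axy: "a * (x * y) \<in> M" .
  show ?thesis
  proof (cases "a \<in> M \<and> b \<in> M")
    case True
    then have "x * a + y * b + c \<in> M"
      using M_add[OF M_add[OF mult_M[OF xR1] mult_M[OF yR1]] cM] by (simp add: mult.commute)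
    then show ?thesis using xy by simp
  next
    case False
    then show ?thesis using M_cancel_unit_R abc(1,2) axy bxy by blast
  qed
qed

lemma R1_decompose:
  assumes "\<not> M1 \<subseteq> M" and x: "x \<in> R1"
  shows "\<exists>r\<in>R. \<exists>n\<in>M1. x = r + n"
proof (rule ccontr)
  assume x_nonres: "\<not> ?thesis"
  obtain n where n: "n \<in> M1" "n \<notin> M" using assms(1) by blast
  have nR1: "n \<in> R1" using n M1_sub_R1 by auto
  obtain a b c where abc: "a \<in> R" "b \<in> R" "c \<in> R" and xn: "x * n = x * a + n * b + c"
    using quadratic_relation[OF x nR1] by blast
  have bR1: "b \<in> R1" using abc R_sub_R1 by auto
  have xbn: "(x - b) * n = x * a + c" using xn by (simp add: algebra_simps)
  have xac: "x * a + c \<in> M1" using M1_mult[OF R1_diff[OF x bR1] n(1)] xbn by simp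
  have "a \<in> M"
  proof (rule ccontr)
    assume "a \<notin> M"
    then obtain z where z: "z \<in> R" "a * z = 1" using local_ring_unit[OF local_R] abc(1) by blast
    have "z * (x * a + c) = x * (a * z) + c * z" by (simp add: algebra_simps)
    then have "x = - (c * z) + z * (x * a + c)" using z(2) by simp
    moreover have "- (c * z) \<in> R" using subring_uminus[OF subring_R R_mult[OF abc(3) z(1)]] .
    moreover have "z * (x * a + c) \<in> M1" using M1_mult[OF _ xac] z(1) R_sub_R1 by blast
    ultimately show False using x_nonres by blast
  qed
  then have xaM: "x * a \<in> M" using mult_M[OF x] by blast
  then have "c \<in> M1" using M1_diff[OF xac, of "x * a"] M_sub_M1 by auto
  then have "x * a + c \<in> M" using M_add[OF xaM M1_inter_R[OF abc(3)]] by blast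
  moreover have "x - b \<notin> M1"
  proof
    assume "x - b \<in> M1"
    then show False using x_nonres abc(2) by force
  qed
  ultimately show False using M_cancel_unit_R1[OF R1_diff[OF x bR1]] xbn n(2) by metis
qed

lemma R1_generated_if_M1_sub_M:
  assumes "M1 \<subseteq> M" and x: "x \<in> R1" "x \<notin> R" and y: "y \<in> R1"
  shows "\<exists>a\<in>R. \<exists>b\<in>R. y = a + x * b"
proof -
  obtain a b c where abc: "a \<in> R" "b \<in> R" "c \<in> R" and xy: "x * y = x * a + y * b + c"
    using quadratic_relation[OF x(1) y] by blast
  define u where "u = x - b"
  have uR1: "u \<in> R1" unfolding u_def using R1_diff[OF x(1)] abc(2) R_sub_R1 by auto
  have uR: "u \<notin> R"
  proof
    assume "u \<in> R"
    then have "u + b \<in> R" using R_add abc(2) by simp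
    then show False using x(2) by (simp add: u_def)
  qed
  obtain a' b' t where abt: "a' \<in> R" "b' \<in> R" "t \<in> R" and uu: "u * u = u * a' + u * b' + t"
    using quadratic_relation[OF uR1 uR1] by blast
  define s where "s = a' + b'"
  have sR: "s \<in> R" unfolding s_def using R_add[OF abt(1,2)] .
  have u_us: "u * (u - s) = t" using uu by (simp add: s_def algebra_simps)
  have "t \<notin> M"
  proof
    assume "t \<in> M"
    moreover have "u \<notin> M1" using uR assms(1) M_sub_R by blast
    ultimately have "u - s \<in> M" using M_cancel_unit_R1[OF uR1] u_us by blast
    then have "u - s + s \<in> R" using R_add[OF _ sR] M_sub_R by blast
    then show False using uR by simp
  qed
  then obtain z where z: "z \<in> R" "t * z = 1" using local_ring_unit[OF local_R] abt(3) by blast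
  define d where "d = a * b + c"
  have dR: "d \<in> R" unfolding d_def using R_add[OF R_mult[OF abc(1,2)] abc(3)] .
  have uy: "u * y = u * a + d" using xy by (simp add: u_def d_def algebra_simps)
  txt \<open>\<open>u\<close> is a unit of \<open>R1\<close> with inverse \<open>z (u - s)\<close>, which lies in \<open>R + R x\<close>.\<close>
  have "y = y * (u * (u - s) * z)" using u_us z(2) by simp
  also have "\<dots> = (u * a + d) * (u - s) * z" unfolding uy[symmetric] by (simp add: ac_simps)
  also have "\<dots> = a * (u * (u - s) * z) + d * z * (u - s)" by (simp add: algebra_simps)
  also have "\<dots> = a + d * z * (u - s)" using u_us z(2) by simp
  also have "\<dots> = (a - d * z * (b + s)) + x * (d * z)" by (simp add: u_def algebra_simps)
  finally have "y = (a - d * z * (b + s)) + x * (d * z)" .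
  moreover have "d * z \<in> R" using R_mult[OF dR z(1)] .
  moreover then have "a - d * z * (b + s) \<in> R" using R_diff[OF abc(1) R_mult[OF _ R_add[OF abc(2) sR]]] by blast
  ultimately show ?thesis by blast
qed

lemma R1_generated_if_principal:
  assumes "\<not> M1 \<subseteq> M" and g: "g \<in> M1" "\<forall>n\<in>M1. \<exists>r\<in>R1. n = r * g"
    and x: "x \<in> R1" "x \<notin> R" and y: "y \<in> R1"
  shows "\<exists>a\<in>R. \<exists>b\<in>R. y = a + x * b"
proof -
  have M1_decompose: "\<exists>\<alpha>\<in>R. \<exists>\<mu>\<in>M. n = g * \<alpha> + \<mu>" if n: "n \<in> M1" for n
  proof -
    obtain r where r: "r \<in> R1" "n = r * g" using bspec[OF g(2) n] by auto
    obtain \<alpha> e where "\<alpha> \<in> R" "e \<in> M1" "r = \<alpha> + e" using R1_decompose[OF assms(1) r(1)] by auto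
    moreover have "n = g * \<alpha> + e * g" using r(2) \<open>r = \<alpha> + e\<close> by (simp add: algebra_simps)
    ultimately show ?thesis using product_in_M[OF \<open>e \<in> M1\<close> g(1)] by blast
  qed
  obtain r0 n0 where x_eq: "r0 \<in> R" "n0 \<in> M1" "x = r0 + n0" using R1_decompose[OF assms(1) x(1)] by auto
  obtain a0 e0 where n0_eq: "a0 \<in> R" "e0 \<in> M" "n0 = g * a0 + e0" using M1_decompose[OF x_eq(2)] by auto
  have "a0 \<notin> M"
  proof
    assume "a0 \<in> M"
    then have "g * a0 + e0 \<in> M" using M_add[OF mult_M n0_eq(2)] g(1) M1_sub_R1 by auto
    then have "r0 + n0 \<in> R" using R_add[OF x_eq(1)] M_sub_R n0_eq(3) by auto
    then show False using x_eq(3) x(2) by simp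
  qed
  then obtain z where z: "z \<in> R" "a0 * z = 1" using local_ring_unit[OF local_R] n0_eq(1) by blast
  obtain r n where y_eq: "r \<in> R" "n \<in> M1" "y = r + n" using R1_decompose[OF assms(1) y] by auto
  obtain \<alpha> \<mu> where n_eq: "\<alpha> \<in> R" "\<mu> \<in> M" "n = g * \<alpha> + \<mu>" using M1_decompose[OF y_eq(2)] by auto
  have "x * (z * \<alpha>) = z * \<alpha> * (r0 + e0) + g * \<alpha> * (a0 * z)"
    using x_eq(3) n0_eq(3) by (simp add: algebra_simps)
  then have "y = (r + \<mu> - z * \<alpha> * (r0 + e0)) + x * (z * \<alpha>)"
    using z(2) y_eq(3) n_eq(3) by simp
  moreover have "r + \<mu> - z * \<alpha> * (r0 + e0) \<in> R"
    using R_diff[OF R_add[OF y_eq(1)] R_mult[OF R_mult[OF z(1) n_eq(1)] R_add[OF x_eq(1)]]]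
      M_sub_R n_eq(2) n0_eq(2) by blast
  ultimately show ?thesis using R_mult[OF z(1) n_eq(1)] by auto
qed

lemma R1_generated_by_nonresidue:
  assumes "principal_ideal R1 M1" "x \<in> R1" "x \<notin> R"
  shows "R1 = {a + x * b |a b. a \<in> R \<and> b \<in> R}"
proof
  obtain g where g: "g \<in> R1" "M1 = {r * g |r. r \<in> R1}"
    using assms(1) by (auto simp: principal_ideal_def)
  have "1 \<in> R1" using subring_R1 by (simp add: subring_def)
  then have "g \<in> M1" using g(2) by force
  have gen: "\<forall>n\<in>M1. \<exists>r\<in>R1. n = r * g" using g(2) by blast
  show "R1 \<subseteq> {a + x * b |a b. a \<in> R \<and> b \<in> R}"
  proof
    fix y assume y: "y \<in> R1"
    have "\<exists>a\<in>R. \<exists>b\<in>R. y = a + x * b"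
    proof (cases "M1 \<subseteq> M")
      case True
      show ?thesis using R1_generated_if_M1_sub_M[OF True assms(2,3) y] .
    next
      case False
      show ?thesis using R1_generated_if_principal[OF False \<open>g \<in> M1\<close> gen assms(2,3) y] .
    qed
    then show "y \<in> {a + x * b |a b. a \<in> R \<and> b \<in> R}" by blast
  qed
  show "{a + x * b |a b. a \<in> R \<and> b \<in> R} \<subseteq> R1"
  proof (rule subsetI, elim CollectE exE conjE)
    fix y a b assume "y = a + x * b" "a \<in> R" "b \<in> R"
    moreover have "a \<in> R1" "b \<in> R1" using \<open>a \<in> R\<close> \<open>b \<in> R\<close> R_sub_R1 by auto
    ultimately show "y \<in> R1" using R1_add[OF _ R1_mult[OF assms(2)]] by simp
  qed
qed

lemma E_M1_eq_R1_if_not_multiplier: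
  assumes m': "\<forall>x\<in>M. m' * x \<in> R1" and "\<not> (\<forall>n\<in>M1. m' * n \<in> E M1)"
  shows "E M1 = R1 \<and> (\<exists>g\<in>M1. \<forall>n\<in>M1. \<exists>r\<in>R1. n = r * g)"
proof -
  obtain n0 g where n0: "n0 \<in> M1" and g: "g \<in> M1" and jg: "m' * n0 * g \<notin> M1"
    using assms(2) by (auto simp: E_def)
  define j where "j = m' * n0"
  have j_mult: "j * n \<in> R1" if "n \<in> M1" for n
    using bspec[OF m' product_in_M[OF n0 that]] by (simp add: j_def mult.assoc)
  txt \<open>\<open>j g\<close> is a unit of \<open>R1\<close>, so \<open>g\<close> is invertible with inverse \<open>j w\<close>.\<close>
  obtain w where w: "w \<in> R1" "j * g * w = 1"
    using local_ring_unit[OF local_R1 j_mult[OF g]] jg by (auto simp: j_def)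
  have gen: "\<forall>n\<in>M1. \<exists>r\<in>R1. n = r * g"
  proof
    fix n assume "n \<in> M1"
    have "n = (w * (j * n)) * g" using w(2) by (metis mult.commute mult.left_commute mult_1_right)
    then show "\<exists>r\<in>R1. n = r * g" using R1_mult[OF w(1) j_mult[OF \<open>n \<in> M1\<close>]] by blast
  qed
  have "E M1 \<subseteq> R1"
  proof
    fix q assume "q \<in> E M1"
    then have "q * g \<in> M1" using g by (simp add: E_def)
    then obtain r where r: "r \<in> R1" "q * g = r * g" using gen by blast
    have gjw: "g * (j * w) = 1" using w(2) by (simp add: ac_simps)
    have "q = (q * g) * (j * w)" using gjw by (simp add: mult.assoc)
    also have "\<dots> = r * (g * (j * w))" using r(2) by (simp add: mult.assoc)
    also have "\<dots> = r" using gjw by simp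
    finally show "q \<in> R1" using r(1) by simp
  qed
  moreover have "R1 \<subseteq> E M1" using M1_mult by (auto simp: E_def)
  ultimately show ?thesis using g gen by blast
qed

lemma maximal_ideal_stable_if_E_ne:
  assumes "R1 = E M" and m: "m \<in> M" "m * m' = 1" "\<forall>x\<in>M. m' * x \<in> R1" and "R1 \<noteq> E M1"
  shows "M1 = ideal_times M (E M1) \<and> stable R1 M1 \<and> R1 = ideal_sum R M1"
proof (intro conjI)
  have m'_E: "\<forall>n\<in>M1. m' * n \<in> E M1"
    using E_M1_eq_R1_if_not_multiplier[OF m(3)] assms(5) by auto
  have "m \<in> M1" using m(1) M_sub_M1 by blast
  show "stable R1 M1" using stable_if_invertible_generator[OF subring_R1 ideal_M1 \<open>m \<in> M1\<close> m(2) m'_E] .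
  show "M1 = ideal_times M (E M1)"
  proof
    show "M1 \<subseteq> ideal_times M (E M1)"
    proof
      fix n assume "n \<in> M1"
      then have "m * (m' * n) \<in> ideal_times M (E M1)" using ideal_times_mem m(1) m'_E by blast
      then show "n \<in> ideal_times M (E M1)" using m(2) by (simp add: mult.assoc[symmetric])
    qed
    show "ideal_times M (E M1) \<subseteq> M1" using ideal_times_E_subset[OF ideal_M1 M_sub_M1] .
  qed
  have "\<not> M1 \<subseteq> M"
  proof
    assume "M1 \<subseteq> M"
    then have "M1 = M" using M_sub_M1 by blast
    then show False using assms(1,5) by simp
  qed
  then show "R1 = ideal_sum R M1"
    using R1_decompose R1_add R_sub_R1 M1_sub_R1 unfolding ideal_sum_def by blast
qed

lemma maximal_ideal_principal_if_E_eq: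
  assumes m: "m \<in> M" "m * m' = 1" "\<forall>x\<in>M. m' * x \<in> R1" and "E M1 = R1"
  shows "principal_ideal R1 M1"
proof -
  have "\<exists>g\<in>R1. M1 = {r * g |r. r \<in> R1}"
  proof (cases "\<forall>n\<in>M1. m' * n \<in> E M1")
    case True
    have "M1 \<subseteq> M"
    proof
      fix n assume "n \<in> M1"
      moreover have "n = (m' * n) * m" using m(2) by (metis mult.commute mult.left_commute mult_1_right)
      ultimately show "n \<in> M" using mult_M m(1) True assms(4) by metis
    qed
    then have "M1 = {r * m |r. r \<in> R1}"
      using M_sub_M1 m mult_M by (auto simp: mult.commute) (metis mult.left_commute mult_1_right)
    then show ?thesis using m(1) M_sub_R R_sub_R1 by blast
  next
    case False
    then obtain g where "g \<in> M1" "\<forall>n\<in>M1. \<exists>r\<in>R1. n = r * g"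
      using E_M1_eq_R1_if_not_multiplier[OF m(3)] by blast
    then have "M1 = {r * g |r. r \<in> R1}" using M1_mult by blast
    then show ?thesis using \<open>g \<in> M1\<close> M1_sub_R1 by blast
  qed
  then show ?thesis using ideal_M1 by (simp add: principal_ideal_def)
qed

end

theorem lemma3p10:
  fixes R M M1 :: "'a::comm_ring_1 set"
  assumes Q: "total_quotient_ring R"
    and loc: "local_ring R M"
    and reg: "regular_ideal R M"
    and st: "stable R M"
    and quad: "quadratic_ext R (E M)"
    and loc1: "local_ring (E M) M1"
  shows "(E M \<noteq> E M1 \<longrightarrow>
            M1 = ideal_times M (E M1) \<and> stable (E M) M1 \<and> E M = ideal_sum R M1)
       \<and> (E M = E M1 \<longrightarrow>
            principal_ideal (E M) M1 \<and>
            (\<forall>x\<in>E M - R. E M = {a + x * b |a b. a \<in> R \<and> b \<in> R}))"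
proof -
  interpret quadratic_local_extension R M "E M" M1
    using loc loc1 quad by unfold_locales simp_all
  obtain b where "b \<in> M" "nzd R b" using reg by (auto simp: regular_ideal_def)
  moreover obtain c where "b * c = 1" using Q \<open>nzd R b\<close> by (auto simp: total_quotient_ring_def)
  moreover have "M \<subseteq> E M" using M_sub_R R_sub_R1 by blast
  ultimately obtain m m' where m: "m \<in> M" "m * m' = 1" "\<forall>x\<in>M. m' * x \<in> E M"
    using projective_local_invertible_generator[of M b c M1] st loc1 by (auto simp: stable_def)
  have "E M \<noteq> E M1 \<longrightarrow> M1 = ideal_times M (E M1) \<and> stable (E M) M1 \<and> E M = ideal_sum R M1"
    using maximal_ideal_stable_if_E_ne[OF refl m] by blast
  moreover have "principal_ideal (E M) M1" if "E M = E M1"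
    using maximal_ideal_principal_if_E_eq[OF m] that by simp
  ultimately show ?thesis using R1_generated_by_nonresidue by blast
qed

end
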